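(* Let $\epsilon>0$, $\delta>0$, and let $\rho$ be a pure $n$-qubit state. Then $N=O(n\log(1/\delta)/\epsilon^2)$ pairs of copies $\rho\otimes\rho$ suffice to produce, with probability $1-\delta$, simultaneously for all $x=(v_1,w_1,\dots,v_n,w_n)\in\{0,1\}^{2n}$ and all $1\le k\le n$: estimates $\pi_\rho(v_1,w_1,\dots,v_k,w_k)$ with $|\pi_\rho(v_1,w_1,\dots,v_k,w_k)-p_\rho(v_1,w_1,\dots,v_k,w_k)|\le\epsilon/2^k$, and estimates $\pi_\rho(v_1,w_1,\dots,v_k)$ with $|\pi_\rho(v_1,w_1,\dots,v_k)-p_\rho(v_1,w_1,\dots,v_k)|\le 2\epsilon/2^k$.
   Context: Pauli strings are labelled by $x=(v_1,w_1,\dots,v_n,w_n)\in\{0,1\}^{2n}$ via $P_x=i^{v\cdot w}(X^{v_1}Z^{w_1})\otimes\cdots\otimes(X^{v_n}Z^{w_n})$. The Pauli distribution of a pure state is $p_\rho(x)=\mathrm{tr}(\rho P_x)^2/2^n$, viewed as a distribution on bit strings of length $2n$; $p_\rho(v_1,w_1,\dots,v_k,w_k)$ and $p_\rho(v_1,w_1,\dots,v_k)$ denote its marginals on the first $2k$ and first $2k-1$ bits respectively (sums over all remaining bits). *)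

theory Defs
  imports "Jordan_Normal_Form.Matrix"
begin

text \<open>Kronecker (tensor) product; the first factor is the most significant index.\<close>
definition kron :: "complex mat \<Rightarrow> complex mat \<Rightarrow> complex mat" where
  "kron A B = mat (dim_row A * dim_row B) (dim_col A * dim_col B)
     (\<lambda>(i, j). A $$ (i div dim_row B, j div dim_col B) * B $$ (i mod dim_row B, j mod dim_col B))"

definition mtrace :: "complex mat \<Rightarrow> complex" where
  "mtrace A = (\<Sum>i<dim_row A. A $$ (i, i))"

definition psd_mat :: "nat \<Rightarrow> complex mat \<Rightarrow> bool" where
  "psd_mat d A \<longleftrightarrow> A \<in> carrier_mat d d \<and>
     (\<forall>v \<in> carrier_vec d. Im ((A *\<^sub>v v) \<bullet> conjugate v) = 0 \<and> Re ((A *\<^sub>v v) \<bullet> conjugate v) \<ge> 0)"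

definition is_povm :: "nat \<Rightarrow> complex mat list \<Rightarrow> bool" where
  "is_povm d Ms \<longleftrightarrow> (\<forall>M \<in> set Ms. psd_mat d M) \<and> foldr (+) Ms (0\<^sub>m d d) = 1\<^sub>m d"

text \<open>Pure n-qubit states are unit vectors psi in C^(2^n); rho = |psi><psi|.\<close>
definition pure_state :: "nat \<Rightarrow> complex vec \<Rightarrow> bool" where
  "pure_state n \<psi> \<longleftrightarrow> \<psi> \<in> carrier_vec (2 ^ n) \<and> \<psi> \<bullet> conjugate \<psi> = 1"

definition density :: "complex vec \<Rightarrow> complex mat" where
  "density \<psi> = mat (dim_vec \<psi>) (dim_vec \<psi>) (\<lambda>(i, j). \<psi> $ i * cnj (\<psi> $ j))"

definition pauliX :: "complex mat" where
  "pauliX = mat_of_rows_list 2 [[0, 1], [1, 0]]"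

definition pauliZ :: "complex mat" where
  "pauliZ = mat_of_rows_list 2 [[1, 0], [0, -1]]"

definition pauli1 :: "bool \<Rightarrow> bool \<Rightarrow> complex mat" where
  "pauli1 v w = (if v then pauliX else 1\<^sub>m 2) * (if w then pauliZ else 1\<^sub>m 2)"

text \<open>A label x = (v1,w1,...,vn,wn) is a bool list of length 2n.\<close>
fun pauli_tensor :: "bool list \<Rightarrow> complex mat" where
  "pauli_tensor (v # w # xs) = kron (pauli1 v w) (pauli_tensor xs)"
| "pauli_tensor _ = 1\<^sub>m 1"

fun vdotw :: "bool list \<Rightarrow> nat" where
  "vdotw (v # w # xs) = (if v \<and> w then 1 else 0) + vdotw xs"
| "vdotw _ = 0"

definition pauli :: "bool list \<Rightarrow> complex mat" where
  "pauli x = (\<i> ^ vdotw x) \<cdot>\<^sub>m pauli_tensor x"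

definition pauli_dist :: "nat \<Rightarrow> complex vec \<Rightarrow> bool list \<Rightarrow> real" where
  "pauli_dist n \<psi> x = Re ((mtrace (density \<psi> * pauli x)) ^ 2) / 2 ^ n"

definition pauli_marginal :: "nat \<Rightarrow> complex vec \<Rightarrow> bool list \<Rightarrow> real" where
  "pauli_marginal n \<psi> pre =
     (\<Sum>x \<in> {x. length x = 2 * n \<and> take (length pre) x = pre}. pauli_dist n \<psi> x)"

definition good_estimates :: "nat \<Rightarrow> real \<Rightarrow> complex vec \<Rightarrow> (bool list \<Rightarrow> real) \<Rightarrow> bool" where
  "good_estimates n \<epsilon> \<psi> \<pi> \<longleftrightarrow>
     (\<forall>k \<in> {1..n}.
        (\<forall>pre. length pre = 2 * k \<longrightarrow> \<bar>\<pi> pre - pauli_marginal n \<psi> pre\<bar> \<le> \<epsilon> / 2 ^ k) \<and>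
        (\<forall>pre. length pre = 2 * k - 1 \<longrightarrow> \<bar>\<pi> pre - pauli_marginal n \<psi> pre\<bar> \<le> 2 * \<epsilon> / 2 ^ k))"

definition outcome_prob :: "complex mat list \<Rightarrow> complex vec \<Rightarrow> nat \<Rightarrow> real" where
  "outcome_prob Ms \<psi> i = Re (mtrace (Ms ! i * kron (density \<psi>) (density \<psi>)))"

text \<open>The POVM Ms is applied independently to each of N pairs rho (x) rho; the
  classical post-processing est maps the list of N outcomes to estimates.\<close>
definition success_prob ::
  "nat \<Rightarrow> real \<Rightarrow> nat \<Rightarrow> complex mat list \<Rightarrow> (nat list \<Rightarrow> bool list \<Rightarrow> real) \<Rightarrow> complex vec \<Rightarrow> real" where
  "success_prob n \<epsilon> N Ms est \<psi> =
     (\<Sum>os \<in> {os. length os = N \<and> set os \<subseteq> {..<length Ms} \<and> good_estimates n \<epsilon> \<psi> (est os)}.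
        prod_list (map (outcome_prob Ms \<psi>) os))"

end

theory Submission
  imports Defs
begin

(* Bell sampling: measuring rho (x) rho in the basis of normalised vectorised Pauli operators
   returns a label x with probability q(x) = |<P_x, psi psi^T>|^2 / 2^n.  The twirl identity
   sum_x s(x,y) (P_x)_ij conj (P_x)_i'j' = 2^n (P_y)_ii' (P_y)_jj', for a suitable sign s, turns the
   s(-,y)-transform of q into tr(rho P_y)^2 = 2^n p_rho(y).  Summing over the unseen suffixes,
   each even marginal p_rho(a) with |a| = 2k is 2^-k times the q-mean of a +-1-valued function of
   the sample, so an empirical mean over N samples misses it by more than eps/2^k with probability
   at most 2 exp(-N eps^2/16) (Chernoff).  A union bound over the fewer than 8^n even prefixes
   makes the total failure probability at most delta once N >= 80 n ln(1/delta)/eps^2; odd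
   marginals are sums of two even ones, hence the error 2 eps/2^k. *)

section \<open>Pauli labels and matrix entries\<close>

definition labels :: "nat \<Rightarrow> bool list set" where
  "labels m = {x. length x = 2 * m}"

lemma finite_labels [simp]: "finite (labels m)"
  unfolding labels_def by (rule finite_list_length)

lemma labels_0 [simp]: "labels 0 = {[]}"
  by (auto simp: labels_def)

lemma card_labels: "card (labels m) = 4 ^ m"
proof -
  have "labels m = {xs. set xs \<subseteq> (UNIV :: bool set) \<and> length xs = 2 * m}"
    by (auto simp: labels_def)
  then show ?thesis
    using card_lists_length_eq[of "UNIV :: bool set" "2 * m"] by (simp add: power_mult)
qed

lemma sum_labels_Suc:
  "(\<Sum>x\<in>labels (Suc m). f x) = (\<Sum>v\<in>UNIV. \<Sum>w\<in>UNIV. \<Sum>x\<in>labels m. f (v # w # x))"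
proof -
  have eq: "labels (Suc m) = (\<lambda>(v, w, x). v # w # x) ` (UNIV \<times> UNIV \<times> labels m)"
    by (auto simp: labels_def image_iff length_Suc_conv numeral_2_eq_2)
  have inj: "inj_on (\<lambda>(v, w, x). v # w # x) (UNIV \<times> UNIV \<times> labels m)"
    by (auto simp: inj_on_def)
  have "(\<Sum>x\<in>labels (Suc m). f x) = (\<Sum>(v, w, x)\<in>UNIV \<times> UNIV \<times> labels m. f (v # w # x))"
    unfolding eq by (subst sum.reindex[OF inj]) (simp add: comp_def case_prod_beta)
  also have "\<dots> = (\<Sum>v\<in>UNIV. \<Sum>w\<in>UNIV. \<Sum>x\<in>labels m. f (v # w # x))"
    by (simp add: sum.cartesian_product)
  finally show ?thesis .
qed

lemma extensions_eq_append_image: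
  assumes "length a = 2 * k" "k \<le> n"
  shows "{x. length x = 2 * n \<and> take (length a) x = a} = (\<lambda>b. a @ b) ` labels (n - k)"
proof (intro Set.set_eqI iffI)
  fix x assume x: "x \<in> {x. length x = 2 * n \<and> take (length a) x = a}"
  then have "x = a @ drop (length a) x"
    by (metis (mono_tags) append_take_drop_id mem_Collect_eq)
  moreover have "drop (length a) x \<in> labels (n - k)"
    using x assms by (simp add: labels_def)
  ultimately show "x \<in> (\<lambda>b. a @ b) ` labels (n - k)" by blast
qed (use assms in \<open>auto simp: labels_def\<close>)

definition labels_list :: "nat \<Rightarrow> bool list list" where
  "labels_list n = List.n_lists (2 * n) [False, True]"

lemma length_labels_list [simp]: "length (labels_list n) = 4 ^ n"
proof -
  have "length (labels_list n) = 2 ^ (2 * n)"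
    by (simp add: labels_list_def length_n_lists numeral_2_eq_2)
  then show ?thesis
    by (simp add: power_mult)
qed

lemma set_labels_list: "set (labels_list n) = labels n"
  by (auto simp: labels_list_def set_n_lists labels_def)

lemma labels_list_nth: "t < 4 ^ n \<Longrightarrow> labels_list n ! t \<in> labels n"
  using nth_mem[of t "labels_list n"] by (simp add: set_labels_list)

lemma sum_labels_list_nth: "(\<Sum>t<4 ^ n. f (labels_list n ! t)) = (\<Sum>x\<in>labels n. f x)"
proof -
  have "distinct (labels_list n)"
    by (simp add: labels_list_def distinct_n_lists)
  then have "(\<Sum>x\<in>labels n. f x) = sum_list (map f (labels_list n))"
    by (simp add: sum_list_distinct_conv_sum_set set_labels_list)
  then show ?thesis
    by (simp add: sum_list_sum_nth atLeast0LessThan)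
qed

definition xz_entry :: "bool \<Rightarrow> bool \<Rightarrow> nat \<Rightarrow> nat \<Rightarrow> complex" where
  "xz_entry v w i j = (if j = (if v then 1 - i else i) then (if w \<and> j = 1 then -1 else 1) else 0)"

lemma pauli1_eq_mat: "pauli1 v w = mat 2 2 (\<lambda>(i, j). xz_entry v w i j)"
proof (rule eq_matI)
  fix i j assume "i < dim_row (mat 2 2 (\<lambda>(i, j). xz_entry v w i j))"
    "j < dim_col (mat 2 2 (\<lambda>(i, j). xz_entry v w i j))"
  then have "i \<in> {0, 1}" "j \<in> {0, 1}" by auto
  then show "pauli1 v w $$ (i, j) = mat 2 2 (\<lambda>(i, j). xz_entry v w i j) $$ (i, j)"
    by (cases v; cases w; auto simp: pauli1_def pauliX_def pauliZ_def mat_of_rows_list_def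
        xz_entry_def scalar_prod_def row_def col_def)
qed (cases v; cases w; simp add: pauli1_def pauliX_def pauliZ_def mat_of_rows_list_def)+

definition qubit_pauli_entry :: "bool \<Rightarrow> bool \<Rightarrow> nat \<Rightarrow> nat \<Rightarrow> complex" where
  "qubit_pauli_entry v w i j = \<i> ^ of_bool (v \<and> w) * xz_entry v w i j"

fun pauli_tensor_entry :: "bool list \<Rightarrow> nat \<Rightarrow> nat \<Rightarrow> complex" where
  "pauli_tensor_entry (v # w # xs) i j =
     xz_entry v w (i div 2 ^ (length xs div 2)) (j div 2 ^ (length xs div 2)) *
     pauli_tensor_entry xs (i mod 2 ^ (length xs div 2)) (j mod 2 ^ (length xs div 2))"
| "pauli_tensor_entry _ i j = of_bool (i = j)"

lemma pauli_tensor_eq_mat: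
  "length x = 2 * m \<Longrightarrow> pauli_tensor x = mat (2 ^ m) (2 ^ m) (\<lambda>(i, j). pauli_tensor_entry x i j)"
proof (induction m arbitrary: x)
  case 0
  then show ?case by (auto intro!: eq_matI)
next
  case (Suc m)
  then obtain v w y where x: "x = v # w # y" and y: "length y = 2 * m"
    by (auto simp: length_Suc_conv numeral_2_eq_2)
  have div_less: "i div 2 ^ m < 2" if "i < 2 ^ Suc m" for i :: nat
    using that by (simp add: less_mult_imp_div_less)
  show ?case
    by (rule eq_matI) (auto simp: x y Suc.IH kron_def pauli1_eq_mat div_less)
qed

definition pauli_entry :: "bool list \<Rightarrow> nat \<Rightarrow> nat \<Rightarrow> complex" where
  "pauli_entry x i j = \<i> ^ vdotw x * pauli_tensor_entry x i j"

lemma pauli_eq_mat: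
  "length x = 2 * m \<Longrightarrow> pauli x = mat (2 ^ m) (2 ^ m) (\<lambda>(i, j). pauli_entry x i j)"
  by (auto simp: pauli_def pauli_tensor_eq_mat pauli_entry_def intro!: eq_matI)

lemma pauli_entry_Cons:
  "pauli_entry (v # w # xs) i j =
     qubit_pauli_entry v w (i div 2 ^ (length xs div 2)) (j div 2 ^ (length xs div 2)) *
     pauli_entry xs (i mod 2 ^ (length xs div 2)) (j mod 2 ^ (length xs div 2))"
  by (simp add: pauli_entry_def qubit_pauli_entry_def power_add)

lemma pauli_entry_identity:
  assumes "i < 2 ^ m" "j < 2 ^ m"
  shows "pauli_entry (replicate (2 * m) False) i j = of_bool (i = j)"
  using assms
proof (induction m arbitrary: i j)
  case (Suc m)
  have "i = j \<longleftrightarrow> i div 2 ^ m = j div 2 ^ m \<and> i mod 2 ^ m = j mod 2 ^ m"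
    by (metis div_mult_mod_eq)
  then show ?case
    using Suc.IH[of "i mod 2 ^ m" "j mod 2 ^ m"]
    by (auto simp: pauli_entry_Cons qubit_pauli_entry_def xz_entry_def)
qed (simp add: pauli_entry_def)

section \<open>The twirl identity\<close>

definition qubit_sign :: "bool \<Rightarrow> bool \<Rightarrow> bool \<Rightarrow> bool \<Rightarrow> real" where
  "qubit_sign xv xw yv yw = (-1) ^ (of_bool (xv \<and> yw) + of_bool (xw \<and> yv) + of_bool (yv \<and> yw))"

fun pauli_sign :: "bool list \<Rightarrow> bool list \<Rightarrow> real" where
  "pauli_sign (xv # xw # xs) (yv # yw # ys) = qubit_sign xv xw yv yw * pauli_sign xs ys"
| "pauli_sign _ _ = 1"

lemma abs_pauli_sign [simp]: "\<bar>pauli_sign x y\<bar> = 1"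
  by (induction x y rule: pauli_sign.induct) (simp_all add: qubit_sign_def abs_mult)

lemma pauli_sign_append:
  "length x = length y \<Longrightarrow> even (length x) \<Longrightarrow>
     pauli_sign (x @ x') (y @ y') = pauli_sign x y * pauli_sign x' y'"
  by (induction x y rule: pauli_sign.induct) auto

lemma pauli_sign_identity: "\<forall>b\<in>set y. \<not> b \<Longrightarrow> pauli_sign x y = 1"
  by (induction x y rule: pauli_sign.induct) (auto simp: qubit_sign_def)

lemma abs_sum_pauli_sign: "z \<in> labels m \<Longrightarrow> \<bar>\<Sum>y\<in>labels m. pauli_sign z y\<bar> = 2 ^ m"
proof (induction m arbitrary: z)
  case (Suc m)
  then obtain v w z' where z: "z = v # w # z'" and z': "z' \<in> labels m"
    by (auto simp: labels_def length_Suc_conv numeral_2_eq_2)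
  have "(\<Sum>y\<in>labels (Suc m). pauli_sign z y) =
      (\<Sum>yv\<in>UNIV. \<Sum>yw\<in>UNIV. qubit_sign v w yv yw) * (\<Sum>y\<in>labels m. pauli_sign z' y)"
  proof -
    have "(\<Sum>y\<in>labels (Suc m). pauli_sign z y) =
        (\<Sum>yv\<in>UNIV. \<Sum>yw\<in>UNIV. \<Sum>y\<in>labels m. qubit_sign v w yv yw * pauli_sign z' y)"
      by (simp add: sum_labels_Suc z)
    also have "\<dots> = (\<Sum>yv\<in>UNIV. \<Sum>yw\<in>UNIV. qubit_sign v w yv yw * (\<Sum>y\<in>labels m. pauli_sign z' y))"
      by (simp add: sum_distrib_left)
    finally show ?thesis
      by (simp add: sum_distrib_right)
  qed
  moreover have "\<bar>\<Sum>yv\<in>UNIV. \<Sum>yw\<in>UNIV. qubit_sign v w yv yw\<bar> = 2"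
    by (cases v; cases w) (simp_all add: UNIV_bool qubit_sign_def)
  ultimately show ?case
    using Suc.IH[OF z'] by (simp add: abs_mult)
qed (simp add: labels_def)

lemma qubit_twirl:
  assumes "a < 2" "b < 2" "a' < 2" "b' < 2"
  shows "(\<Sum>v\<in>UNIV. \<Sum>w\<in>UNIV. complex_of_real (qubit_sign v w yv yw) *
            qubit_pauli_entry v w a b * cnj (qubit_pauli_entry v w a' b'))
         = 2 * qubit_pauli_entry yv yw a a' * qubit_pauli_entry yv yw b b'"
  using assms[unfolded less_2_cases_iff]
  by (elim disjE; cases yv; cases yw; simp add: UNIV_bool qubit_sign_def qubit_pauli_entry_def xz_entry_def mult.assoc)

lemma pauli_twirl:
  assumes "length y = 2 * m" "i < 2 ^ m" "j < 2 ^ m" "i' < 2 ^ m" "j' < 2 ^ m"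
  shows "(\<Sum>x\<in>labels m. complex_of_real (pauli_sign x y) * pauli_entry x i j * cnj (pauli_entry x i' j'))
         = 2 ^ m * pauli_entry y i i' * pauli_entry y j j'"
  using assms
proof (induction m arbitrary: y i j i' j')
  case 0
  then show ?case by (simp add: pauli_entry_def)
next
  case (Suc m)
  then obtain yv yw y' where y: "y = yv # yw # y'" and y': "length y' = 2 * m"
    by (auto simp: length_Suc_conv numeral_2_eq_2)
  define M :: nat where "M = 2 ^ m"
  have high: "i div M < 2" "j div M < 2" "i' div M < 2" "j' div M < 2"
    using Suc.prems by (auto simp: M_def less_mult_imp_div_less)
  have low: "i mod M < 2 ^ m" "j mod M < 2 ^ m" "i' mod M < 2 ^ m" "j' mod M < 2 ^ m"
    by (simp_all add: M_def)
  have "(\<Sum>x\<in>labels (Suc m). complex_of_real (pauli_sign x y) * pauli_entry x i j * cnj (pauli_entry x i' j'))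
      = (\<Sum>v\<in>UNIV. \<Sum>w\<in>UNIV. \<Sum>x\<in>labels m.
          (complex_of_real (qubit_sign v w yv yw) * qubit_pauli_entry v w (i div M) (j div M) *
             cnj (qubit_pauli_entry v w (i' div M) (j' div M))) *
          (complex_of_real (pauli_sign x y') * pauli_entry x (i mod M) (j mod M) *
             cnj (pauli_entry x (i' mod M) (j' mod M))))"
    unfolding sum_labels_Suc
    by (intro sum.cong refl) (auto simp: y pauli_entry_Cons labels_def M_def)
  also have "\<dots> = (\<Sum>v\<in>UNIV. \<Sum>w\<in>UNIV.
          complex_of_real (qubit_sign v w yv yw) * qubit_pauli_entry v w (i div M) (j div M) *
             cnj (qubit_pauli_entry v w (i' div M) (j' div M))) *
        (\<Sum>x\<in>labels m. complex_of_real (pauli_sign x y') * pauli_entry x (i mod M) (j mod M) *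
             cnj (pauli_entry x (i' mod M) (j' mod M)))"
    by (simp only: sum_distrib_right, simp only: sum_distrib_left)
  also have "\<dots> = (2 * qubit_pauli_entry yv yw (i div M) (i' div M) * qubit_pauli_entry yv yw (j div M) (j' div M)) *
        (2 ^ m * pauli_entry y' (i mod M) (i' mod M) * pauli_entry y' (j mod M) (j' mod M))"
    using qubit_twirl[OF high] Suc.IH[OF y' low] by simp
  also have "\<dots> = 2 ^ Suc m * pauli_entry y i i' * pauli_entry y j j'"
    by (simp add: y y' pauli_entry_Cons M_def)
  finally show ?case .
qed

lemma pauli_entries_orthogonal:
  assumes "i < 2 ^ m" "j < 2 ^ m" "i' < 2 ^ m" "j' < 2 ^ m"
  shows "(\<Sum>x\<in>labels m. pauli_entry x i j * cnj (pauli_entry x i' j')) = of_bool (i = i' \<and> j = j') * 2 ^ m"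
  using pauli_twirl[of "replicate (2 * m) False" m i j i' j'] assms
  by (simp add: pauli_sign_identity pauli_entry_identity)

section \<open>Bell sampling\<close>

lemma psd_mat_rank_one:
  assumes "0 \<le> s"
  shows "psd_mat d (mat d d (\<lambda>(r, c). g r * cnj (g c) / complex_of_real s))"
  unfolding psd_mat_def
proof (intro conjI ballI)
  fix v :: "complex vec" assume v: "v \<in> carrier_vec d"
  define z where "z = (\<Sum>c<d. cnj (g c) * v $ c)"
  have "(mat d d (\<lambda>(r, c). g r * cnj (g c) / complex_of_real s) *\<^sub>v v) \<bullet> conjugate v
      = (\<Sum>r<d. g r * z / s * cnj (v $ r))"
    using v by (simp add: z_def scalar_prod_def row_def sum_distrib_left sum_divide_distrib
        algebra_simps atLeast0LessThan)
  also have "\<dots> = z * cnj z / s"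
    unfolding z_def by (simp add: sum_distrib_left sum_divide_distrib algebra_simps, rule sum.swap)
  also have "\<dots> = complex_of_real ((cmod z)\<^sup>2 / s)"
    by (simp only: complex_norm_square[symmetric] of_real_divide of_real_power)
  finally show "Im ((mat d d (\<lambda>(r, c). g r * cnj (g c) / complex_of_real s) *\<^sub>v v) \<bullet> conjugate v) = 0"
    and "0 \<le> Re ((mat d d (\<lambda>(r, c). g r * cnj (g c) / complex_of_real s) *\<^sub>v v) \<bullet> conjugate v)"
    using assms by simp_all
qed simp

lemma foldr_plus_mat:
  "\<forall>A\<in>set As. A \<in> carrier_mat d d' \<Longrightarrow>
     foldr (+) As (0\<^sub>m d d') = mat d d' (\<lambda>(i, j). \<Sum>A\<leftarrow>As. A $$ (i, j))"
  by (induction As) (auto intro!: eq_matI)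

lemma sum_lessThan_mult:
  fixes d e :: nat
  shows "(\<Sum>c<d * e. f c) = (\<Sum>a<d. \<Sum>b<e. f (a * e + b))"
proof -
  have "(\<Sum>c<d * e. f c) = (\<Sum>(a, b)\<in>{..<d} \<times> {..<e}. f (a * e + b))"
  proof (rule sum.reindex_bij_witness[where i = "\<lambda>(a, b). a * e + b" and j = "\<lambda>c. (c div e, c mod e)"])
    fix c assume c: "c \<in> {..<d * e}"
    then have "0 < e" by (cases "e = 0") auto
    with c show "(c div e, c mod e) \<in> {..<d} \<times> {..<e}"
      by (auto simp: less_mult_imp_div_less)
  next
    fix p assume "p \<in> {..<d} \<times> {..<e}"
    then obtain a b where p: "p = (a, b)" "a < d" "b < e" by auto
    have "a * e + b < Suc a * e"
      using \<open>b < e\<close> by simp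
    also have "\<dots> \<le> d * e"
      using \<open>a < d\<close> by (intro mult_le_mono1) simp
    finally show "(\<lambda>(a, b). a * e + b) p \<in> {..<d * e}"
      using p by simp
    show "(\<lambda>c. (c div e, c mod e)) ((\<lambda>(a, b). a * e + b) p) = p"
      using p by simp
  qed simp_all
  then show ?thesis
    by (simp add: sum.cartesian_product)
qed

lemma four_power_eq: "(4 :: nat) ^ n = 2 ^ n * 2 ^ n"
  by (simp add: power_mult_distrib[symmetric])

text \<open>The Bell effect of label x projects onto the vectorisation of the Pauli operator
  P_x (normalised), with the two-copy index r read as the pair (r div 2^n, r mod 2^n).\<close>
definition bell_effect :: "nat \<Rightarrow> bool list \<Rightarrow> complex mat" where
  "bell_effect n x = mat (4 ^ n) (4 ^ n) (\<lambda>(r, c).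
     pauli_entry x (r div 2 ^ n) (r mod 2 ^ n) * cnj (pauli_entry x (c div 2 ^ n) (c mod 2 ^ n)) / 2 ^ n)"

definition bell_povm :: "nat \<Rightarrow> complex mat list" where
  "bell_povm n = map (bell_effect n) (labels_list n)"

lemma length_bell_povm [simp]: "length (bell_povm n) = 4 ^ n"
  by (simp add: bell_povm_def)

lemma bell_povm_is_povm: "is_povm (4 ^ n) (bell_povm n)"
  unfolding is_povm_def
proof (intro conjI ballI)
  fix M assume "M \<in> set (bell_povm n)"
  then show "psd_mat (4 ^ n) M"
    using psd_mat_rank_one[of "2 ^ n" "4 ^ n"] by (auto simp: bell_povm_def bell_effect_def)
next
  have carrier: "\<forall>A\<in>set (bell_povm n). A \<in> carrier_mat (4 ^ n) (4 ^ n)"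
    by (auto simp: bell_povm_def bell_effect_def)
  show "foldr (+) (bell_povm n) (0\<^sub>m (4 ^ n) (4 ^ n)) = 1\<^sub>m (4 ^ n)"
    unfolding foldr_plus_mat[OF carrier]
  proof (rule eq_matI)
    fix r c assume "r < dim_row (1\<^sub>m (4 ^ n) :: complex mat)" "c < dim_col (1\<^sub>m (4 ^ n) :: complex mat)"
    then have rc: "r < 2 ^ n * 2 ^ n" "c < 2 ^ n * 2 ^ n"
      by (simp_all add: four_power_eq)
    have same: "r div 2 ^ n = c div 2 ^ n \<and> r mod 2 ^ n = c mod 2 ^ n \<longleftrightarrow> r = c"
      by (metis div_mult_mod_eq)
    have "(\<Sum>A\<leftarrow>bell_povm n. A $$ (r, c)) = (\<Sum>x\<in>labels n. bell_effect n x $$ (r, c))"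
      using sum_labels_list_nth[of "\<lambda>x. bell_effect n x $$ (r, c)" n]
      by (simp add: bell_povm_def sum_list_sum_nth atLeast0LessThan)
    also have "\<dots> = (\<Sum>x\<in>labels n. pauli_entry x (r div 2 ^ n) (r mod 2 ^ n) *
        cnj (pauli_entry x (c div 2 ^ n) (c mod 2 ^ n))) / 2 ^ n"
      using rc by (simp add: bell_effect_def four_power_eq sum_divide_distrib)
    also have "\<dots> = of_bool (r = c)"
      using rc by (simp add: pauli_entries_orthogonal less_mult_imp_div_less same)
    finally show "mat (4 ^ n) (4 ^ n) (\<lambda>(i, j). \<Sum>A\<leftarrow>bell_povm n. A $$ (i, j)) $$ (r, c) = 1\<^sub>m (4 ^ n) $$ (r, c)"
      using rc by (simp add: four_power_eq)
  qed simp_all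
qed

definition bell_amplitude :: "nat \<Rightarrow> complex vec \<Rightarrow> bool list \<Rightarrow> complex" where
  "bell_amplitude n \<psi> x = (\<Sum>a<2 ^ n. \<Sum>b<2 ^ n. cnj (pauli_entry x a b) * (\<psi> $ a * \<psi> $ b))"

definition bell_prob :: "nat \<Rightarrow> complex vec \<Rightarrow> bool list \<Rightarrow> real" where
  "bell_prob n \<psi> x = (cmod (bell_amplitude n \<psi> x))\<^sup>2 / 2 ^ n"

lemma bell_prob_nonneg: "0 \<le> bell_prob n \<psi> x"
  by (simp add: bell_prob_def)

lemma outcome_prob_bell_povm:
  assumes \<psi>: "\<psi> \<in> carrier_vec (2 ^ n)" and t: "t < 4 ^ n"
  shows "outcome_prob (bell_povm n) \<psi> t = bell_prob n \<psi> (labels_list n ! t)"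
proof -
  define x where "x = labels_list n ! t"
  define d :: nat where "d = 2 ^ n"
  define G where "G c = cnj (pauli_entry x (c div d) (c mod d)) * (\<psi> $ (c div d) * \<psi> $ (c mod d))" for c
  have dim: "dim_vec \<psi> = d" "(4 :: nat) ^ n = d * d" "0 < d"
    using \<psi> by (simp_all add: d_def four_power_eq)
  have kron: "kron (density \<psi>) (density \<psi>) $$ (c, r) =
      (\<psi> $ (c div d) * cnj (\<psi> $ (r div d))) * (\<psi> $ (c mod d) * cnj (\<psi> $ (r mod d)))"
    if "c < d * d" "r < d * d" for c r
    using that dim by (simp add: kron_def density_def less_mult_imp_div_less)
  have "mtrace (bell_effect n x * kron (density \<psi>) (density \<psi>)) =
      (\<Sum>r<d * d. \<Sum>c<d * d. bell_effect n x $$ (r, c) * kron (density \<psi>) (density \<psi>) $$ (c, r))"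
    unfolding mtrace_def using dim
    by (simp add: bell_effect_def scalar_prod_def row_def col_def kron_def density_def atLeast0LessThan)
  also have "\<dots> = (\<Sum>r<d * d. \<Sum>c<d * d. cnj (G r) * G c / 2 ^ n)"
    by (intro sum.cong refl) (simp add: kron bell_effect_def dim G_def d_def[symmetric] algebra_simps)
  also have "\<dots> = cnj (\<Sum>r<d * d. G r) * (\<Sum>c<d * d. G c) / 2 ^ n"
    by (simp add: sum_distrib_left sum_distrib_right sum_divide_distrib, rule sum.swap)
  also have "(\<Sum>c<d * d. G c) = bell_amplitude n \<psi> x"
    unfolding sum_lessThan_mult bell_amplitude_def G_def d_def by simp
  finally have "mtrace (bell_effect n x * kron (density \<psi>) (density \<psi>)) =
      complex_of_real ((cmod (bell_amplitude n \<psi> x))\<^sup>2) / 2 ^ n"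
    by (simp only: mult.commute[of "cnj _"] complex_norm_square[symmetric] of_real_power)
  then show ?thesis
    using t by (simp add: outcome_prob_def bell_povm_def bell_prob_def x_def)
qed

lemma mtrace_density_pauli:
  assumes "\<psi> \<in> carrier_vec (2 ^ n)" "length y = 2 * n"
  shows "mtrace (density \<psi> * pauli y) = (\<Sum>a<2 ^ n. \<Sum>a'<2 ^ n. \<psi> $ a * cnj (\<psi> $ a') * pauli_entry y a' a)"
  using assms unfolding mtrace_def pauli_eq_mat[OF assms(2)]
  by (simp add: density_def scalar_prod_def row_def col_def atLeast0LessThan)

lemma sum_pauli_sign_bell_prob:
  assumes \<psi>: "\<psi> \<in> carrier_vec (2 ^ n)" and y: "length y = 2 * n"
  shows "(\<Sum>x\<in>labels n. pauli_sign x y * bell_prob n \<psi> x) = Re ((mtrace (density \<psi> * pauli y))\<^sup>2)"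
proof -
  define d :: nat where "d = 2 ^ n"
  define P where "P a b a' b' = \<psi> $ a * \<psi> $ b * cnj (\<psi> $ a') * cnj (\<psi> $ b')" for a b a' b'
  have amplitude_sq: "(complex_of_real (cmod (bell_amplitude n \<psi> x)))\<^sup>2 =
     (\<Sum>a<d. \<Sum>a'<d. \<Sum>b<d. \<Sum>b'<d. pauli_entry x a' b' * cnj (pauli_entry x a b) * P a b a' b')" for x
    unfolding of_real_power[symmetric] complex_norm_square bell_amplitude_def cnj_sum complex_cnj_mult
      complex_cnj_cnj sum_product d_def
    by (simp add: P_def algebra_simps)
  have "complex_of_real (\<Sum>x\<in>labels n. pauli_sign x y * bell_prob n \<psi> x) =
     (\<Sum>x\<in>labels n. \<Sum>a<d. \<Sum>a'<d. \<Sum>b<d. \<Sum>b'<d.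
        complex_of_real (pauli_sign x y) * pauli_entry x a' b' * cnj (pauli_entry x a b) * P a b a' b') / 2 ^ n"
    by (simp add: bell_prob_def amplitude_sq sum_divide_distrib sum_distrib_left mult.assoc)
  also have "\<dots> = (\<Sum>a<d. \<Sum>a'<d. \<Sum>b<d. \<Sum>b'<d.
        (\<Sum>x\<in>labels n. complex_of_real (pauli_sign x y) * pauli_entry x a' b' * cnj (pauli_entry x a b))
          * P a b a' b') / 2 ^ n"
    by (simp only: sum.swap[where A = "labels n"] sum_distrib_right)
  also have "\<dots> = (\<Sum>a<d. \<Sum>a'<d. \<Sum>b<d. \<Sum>b'<d.
        (\<psi> $ a * cnj (\<psi> $ a') * pauli_entry y a' a) * (\<psi> $ b * cnj (\<psi> $ b') * pauli_entry y b' b))"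
  proof -
    have "(\<Sum>x\<in>labels n. complex_of_real (pauli_sign x y) * pauli_entry x a' b' * cnj (pauli_entry x a b))
        = 2 ^ n * pauli_entry y a' a * pauli_entry y b' b" if "a < d" "a' < d" "b < d" "b' < d" for a a' b b'
      using that by (simp add: pauli_twirl[OF y] d_def)
    then show ?thesis
      by (simp add: sum_divide_distrib P_def algebra_simps)
  qed
  also have "\<dots> = (mtrace (density \<psi> * pauli y))\<^sup>2"
    unfolding mtrace_density_pauli[OF \<psi> y] power2_eq_square sum_product d_def
    by (rule sum.cong[OF refl], rule sum.swap)
  finally show ?thesis
    by (metis Re_complex_of_real)
qed

lemma sum_bell_prob:
  assumes "pure_state n \<psi>"
  shows "(\<Sum>x\<in>labels n. bell_prob n \<psi> x) = 1"
proof -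
  have \<psi>: "\<psi> \<in> carrier_vec (2 ^ n)" and unit: "\<psi> \<bullet> conjugate \<psi> = 1"
    using assms by (auto simp: pure_state_def)
  let ?I = "replicate (2 * n) False"
  have "mtrace (density \<psi> * pauli ?I) = (\<Sum>a<2 ^ n. \<psi> $ a * cnj (\<psi> $ a))"
    by (simp add: mtrace_density_pauli[OF \<psi>] pauli_entry_identity of_bool_def
        if_distrib[of "\<lambda>t. _ * t"] cong: if_cong)
  also have "\<dots> = 1"
    using unit \<psi> by (simp add: scalar_prod_def atLeast0LessThan)
  finally show ?thesis
    using sum_pauli_sign_bell_prob[OF \<psi>, of ?I] by (simp add: pauli_sign_identity)
qed

section \<open>Pauli marginals as means over Bell samples\<close>

definition sign_average :: "nat \<Rightarrow> bool list \<Rightarrow> bool list \<Rightarrow> real" where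
  "sign_average n a x =
     (\<Sum>b\<in>labels (n - length a div 2). pauli_sign x (a @ b)) / 2 ^ (n - length a div 2)"

lemma pauli_marginal_eq_sign_average:
  assumes \<psi>: "\<psi> \<in> carrier_vec (2 ^ n)" and a: "length a = 2 * k" and k: "k \<le> n"
  shows "pauli_marginal n \<psi> a = (\<Sum>x\<in>labels n. bell_prob n \<psi> x * sign_average n a x) / 2 ^ k"
proof -
  have length_ab: "length (a @ b) = 2 * n" if "b \<in> labels (n - k)" for b
    using that a k by (simp add: labels_def)
  have "pauli_marginal n \<psi> a = (\<Sum>b\<in>labels (n - k). pauli_dist n \<psi> (a @ b))"
    unfolding pauli_marginal_def extensions_eq_append_image[OF a k]
    by (rule sum.reindex[unfolded comp_def]) (simp add: inj_on_def)
  also have "\<dots> = (\<Sum>b\<in>labels (n - k). \<Sum>x\<in>labels n. pauli_sign x (a @ b) * bell_prob n \<psi> x) / 2 ^ n"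
    by (simp add: pauli_dist_def sum_pauli_sign_bell_prob[OF \<psi> length_ab] sum_divide_distrib)
  also have "\<dots> = (\<Sum>x\<in>labels n. bell_prob n \<psi> x * (\<Sum>b\<in>labels (n - k). pauli_sign x (a @ b))) / 2 ^ n"
    by (simp add: sum_distrib_left mult.commute, rule sum.swap)
  also have "\<dots> = (\<Sum>x\<in>labels n. bell_prob n \<psi> x * sign_average n a x) * 2 ^ (n - k) / 2 ^ n"
    by (simp add: sign_average_def a sum_distrib_right)
  also have "\<dots> = (\<Sum>x\<in>labels n. bell_prob n \<psi> x * sign_average n a x) / 2 ^ k"
    using k by (simp add: power_diff)
  finally show ?thesis .
qed

lemma abs_sign_average:
  assumes x: "x \<in> labels n" and a: "length a = 2 * k" and k: "k \<le> n"
  shows "\<bar>sign_average n a x\<bar> = 1"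
proof -
  have "pauli_sign x (a @ b) = pauli_sign (take (length a) x) a * pauli_sign (drop (length a) x) b" for b
    using pauli_sign_append[of "take (length a) x" a "drop (length a) x" b] x a k
    by (simp add: labels_def)
  then have "\<bar>\<Sum>b\<in>labels (n - k). pauli_sign x (a @ b)\<bar> = \<bar>\<Sum>b\<in>labels (n - k). pauli_sign (drop (length a) x) b\<bar>"
    by (simp add: sum_distrib_left[symmetric] abs_mult)
  also have "\<dots> = 2 ^ (n - k)"
    using x a k by (intro abs_sum_pauli_sign) (simp add: labels_def)
  finally show ?thesis
    by (simp add: sign_average_def a)
qed

lemma pauli_marginal_snoc_split:
  assumes "length pre < 2 * n"
  shows "pauli_marginal n \<psi> pre = pauli_marginal n \<psi> (pre @ [False]) + pauli_marginal n \<psi> (pre @ [True])"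
proof -
  define S where "S p = {x. length x = 2 * n \<and> take (length p) x = p}" for p :: "bool list"
  have "finite (S p)" for p
    by (rule finite_subset[OF _ finite_labels[of n]]) (auto simp: S_def labels_def)
  moreover have "S pre = S (pre @ [False]) \<union> S (pre @ [True])"
  proof (intro Set.set_eqI iffI)
    fix x assume "x \<in> S pre"
    then have "length x = 2 * n" "take (Suc (length pre)) x = pre @ [x ! length pre]"
      using assms by (auto simp: S_def take_Suc_conv_app_nth)
    then show "x \<in> S (pre @ [False]) \<union> S (pre @ [True])"
      by (cases "x ! length pre") (auto simp: S_def)
  next
    fix x assume "x \<in> S (pre @ [False]) \<union> S (pre @ [True])"
    then obtain c where "length x = 2 * n" "take (Suc (length pre)) x = pre @ [c]"
      by (auto simp: S_def)
    moreover have "take (length pre) x = take (length pre) (take (Suc (length pre)) x)"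
      by simp
    ultimately show "x \<in> S pre"
      by (simp add: S_def)
  qed
  moreover have "S (pre @ [False]) \<inter> S (pre @ [True]) = {}"
    by (auto simp: S_def)
  ultimately show ?thesis
    unfolding pauli_marginal_def S_def[symmetric] by (simp add: sum.union_disjoint)
qed

definition even_estimate :: "nat \<Rightarrow> nat \<Rightarrow> nat list \<Rightarrow> bool list \<Rightarrow> real" where
  "even_estimate n N os a = (\<Sum>t\<leftarrow>os. sign_average n a (labels_list n ! t)) / N / 2 ^ (length a div 2)"

definition marginal_estimate :: "nat \<Rightarrow> nat \<Rightarrow> nat list \<Rightarrow> bool list \<Rightarrow> real" where
  "marginal_estimate n N os pre =
     (if even (length pre) then even_estimate n N os pre
      else even_estimate n N os (pre @ [False]) + even_estimate n N os (pre @ [True]))"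

definition even_prefixes :: "nat \<Rightarrow> bool list set" where
  "even_prefixes n = (\<Union>k\<in>{1..n}. labels k)"

lemma finite_even_prefixes [simp]: "finite (even_prefixes n)"
  by (simp add: even_prefixes_def)

lemma even_prefixes_0 [simp]: "even_prefixes 0 = {}"
  by (simp add: even_prefixes_def)

lemma card_even_prefixes_le: "card (even_prefixes n) \<le> 8 ^ n"
proof -
  have "card (even_prefixes n) \<le> (\<Sum>k\<in>{1..n}. card (labels k))"
    unfolding even_prefixes_def by (rule card_UN_le) simp
  also have "\<dots> \<le> (\<Sum>k\<in>{1..n}. 4 ^ n)"
    unfolding card_labels by (intro sum_mono power_increasing) auto
  also have "\<dots> = n * 4 ^ n" by simp
  also have "\<dots> \<le> 2 ^ n * 4 ^ n"
    by (intro mult_right_mono less_imp_le less_exp) simp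
  also have "\<dots> = 8 ^ n"
    by (simp add: power_mult_distrib[symmetric])
  finally show ?thesis .
qed

lemma good_estimates_marginal_estimate:
  assumes close: "\<forall>a\<in>even_prefixes n.
    \<bar>even_estimate n N os a - pauli_marginal n \<psi> a\<bar> \<le> \<epsilon> / 2 ^ (length a div 2)"
  shows "good_estimates n \<epsilon> \<psi> (marginal_estimate n N os)"
  unfolding good_estimates_def
proof (intro ballI conjI allI impI)
  fix k :: nat and pre :: "bool list" assume k: "k \<in> {1..n}"
  have close_k: "\<bar>even_estimate n N os a - pauli_marginal n \<psi> a\<bar> \<le> \<epsilon> / 2 ^ k" if "length a = 2 * k" for a
    using close that k by (force simp: even_prefixes_def labels_def)
  {
    assume "length pre = 2 * k"
    then show "\<bar>marginal_estimate n N os pre - pauli_marginal n \<psi> pre\<bar> \<le> \<epsilon> / 2 ^ k"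
      using close_k by (simp add: marginal_estimate_def)
  next
    assume pre: "length pre = 2 * k - 1"
    then have "pauli_marginal n \<psi> pre = pauli_marginal n \<psi> (pre @ [False]) + pauli_marginal n \<psi> (pre @ [True])"
      using k by (intro pauli_marginal_snoc_split) auto
    moreover have "odd (length pre)"
      using pre k by auto
    ultimately have "\<bar>marginal_estimate n N os pre - pauli_marginal n \<psi> pre\<bar> =
        \<bar>(even_estimate n N os (pre @ [False]) - pauli_marginal n \<psi> (pre @ [False])) +
         (even_estimate n N os (pre @ [True]) - pauli_marginal n \<psi> (pre @ [True]))\<bar>"
      by (simp add: marginal_estimate_def)
    also have "\<dots> \<le> \<epsilon> / 2 ^ k + \<epsilon> / 2 ^ k"
      using pre k by (intro order.trans[OF abs_triangle_ineq] add_mono close_k) auto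
    finally show "\<bar>marginal_estimate n N os pre - pauli_marginal n \<psi> pre\<bar> \<le> 2 * \<epsilon> / 2 ^ k"
      by simp
  }
qed

section \<open>Concentration of empirical means\<close>

lemma exp_le_quadratic:
  fixes y :: real
  assumes "\<bar>y\<bar> \<le> 1"
  shows "exp y \<le> 1 + y + y\<^sup>2"
proof (cases "0 \<le> y")
  case True
  then show ?thesis using exp_bound[of y] assms by simp
next
  case False
  define u where "u = - y"
  have u: "0 \<le> u" "u \<le> 1" using False assms by (auto simp: u_def)
  define A where "A = 1 - u + u\<^sup>2"
  have "1 \<le> A * (1 + u + u\<^sup>2 / 2)"
  proof -
    have "A * (1 + u + u\<^sup>2 / 2) = 1 + (u\<^sup>2 + u ^ 3 + u ^ 4) / 2"
      by (simp add: A_def field_simps power2_eq_square power3_eq_cube power4_eq_xxxx)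
    then show ?thesis using u by simp
  qed
  also have "\<dots> \<le> A * exp u"
  proof (rule mult_left_mono)
    show "1 + u + u\<^sup>2 / 2 \<le> exp u" by (rule exp_lower_Taylor_quadratic[OF u(1)])
    have "A = (u - 1 / 2)\<^sup>2 + 3 / 4" by (simp add: A_def power2_eq_square field_simps)
    then show "0 \<le> A" by (metis add_nonneg_nonneg zero_le_power2 zero_le_divide_iff zero_le_numeral)
  qed
  finally have "exp (- u) \<le> A"
    by (simp add: exp_minus inverse_eq_divide divide_le_eq mult.commute)
  then show ?thesis
    by (simp add: u_def A_def)
qed

definition outcome_seqs :: "nat \<Rightarrow> nat \<Rightarrow> nat list set" where
  "outcome_seqs N m = {os. length os = N \<and> set os \<subseteq> {..<m}}"

lemma finite_outcome_seqs [simp]: "finite (outcome_seqs N m)"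
  unfolding outcome_seqs_def using finite_lists_length_eq[of "{..<m}" N] by (simp add: conj_commute)

lemma sum_outcome_seqs_Suc:
  "(\<Sum>os\<in>outcome_seqs (Suc N) m. f os) = (\<Sum>t<m. \<Sum>os\<in>outcome_seqs N m. f (t # os))"
proof -
  have eq: "outcome_seqs (Suc N) m = (\<lambda>(t, os). t # os) ` ({..<m} \<times> outcome_seqs N m)"
    by (auto simp: outcome_seqs_def length_Suc_conv)
  have inj: "inj_on (\<lambda>(t, os). t # os) ({..<m} \<times> outcome_seqs N m)"
    by (auto simp: inj_on_def)
  show ?thesis
    unfolding eq by (subst sum.reindex[OF inj]) (simp add: sum.cartesian_product comp_def case_prod_beta)
qed

lemma sum_prod_list_outcome_seqs:
  fixes q :: "nat \<Rightarrow> real"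
  shows "(\<Sum>os\<in>outcome_seqs N m. prod_list (map q os)) = (\<Sum>t<m. q t) ^ N"
proof (induction N)
  case 0
  have "outcome_seqs 0 m = {[]}" by (auto simp: outcome_seqs_def)
  then show ?case by simp
next
  case (Suc N)
  then show ?case
    by (simp add: sum_outcome_seqs_Suc sum_distrib_left[symmetric] sum_distrib_right[symmetric])
qed

lemma prod_list_mult_exp_centered_sum:
  fixes q g :: "nat \<Rightarrow> real" and s c :: real
  shows "prod_list (map q os) * exp (s * ((\<Sum>t\<leftarrow>os. g t) - length os * c))
    = prod_list (map (\<lambda>t. q t * exp (s * (g t - c))) os)"
proof (induction os)
  case (Cons t os)
  have "s * ((\<Sum>u\<leftarrow>t # os. g u) - length (t # os) * c) = s * (g t - c) + s * ((\<Sum>u\<leftarrow>os. g u) - length os * c)"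
    by (simp add: algebra_simps)
  then show ?case
    using Cons.IH by (simp only: exp_add) (simp add: mult_ac)
qed simp

definition seq_prob :: "(nat \<Rightarrow> real) \<Rightarrow> nat list set \<Rightarrow> real" where
  "seq_prob q A = (\<Sum>os\<in>A. prod_list (map q os))"

lemma success_prob_eq_seq_prob:
  "success_prob n \<epsilon> N Ms est \<psi> = seq_prob (outcome_prob Ms \<psi>)
     {os \<in> outcome_seqs N (length Ms). good_estimates n \<epsilon> \<psi> (est os)}"
  by (simp add: success_prob_def seq_prob_def outcome_seqs_def conj_assoc)

locale finite_distribution =
  fixes m :: nat and q :: "nat \<Rightarrow> real"
  assumes nonneg: "\<And>t. t < m \<Longrightarrow> 0 \<le> q t"
    and sum_eq_1: "(\<Sum>t<m. q t) = 1"
begin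

lemma prod_list_nonneg_outcome_seqs: "os \<in> outcome_seqs N m \<Longrightarrow> 0 \<le> prod_list (map q os)"
  by (induction os arbitrary: N) (auto simp: outcome_seqs_def nonneg length_Suc_conv)

lemma seq_prob_outcome_seqs: "seq_prob q (outcome_seqs N m) = 1"
  by (simp add: seq_prob_def sum_prod_list_outcome_seqs sum_eq_1)

lemma seq_prob_mono:
  "A \<subseteq> B \<Longrightarrow> B \<subseteq> outcome_seqs N m \<Longrightarrow> seq_prob q A \<le> seq_prob q B"
  unfolding seq_prob_def
  by (rule sum_mono2) (auto intro: finite_subset prod_list_nonneg_outcome_seqs)

lemma seq_prob_UN_le:
  assumes "finite I" "\<And>i. i \<in> I \<Longrightarrow> B i \<subseteq> outcome_seqs N m"
  shows "seq_prob q (\<Union>i\<in>I. B i) \<le> (\<Sum>i\<in>I. seq_prob q (B i))"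
proof -
  have finite_B: "finite (B i)" if "i \<in> I" for i
    by (rule finite_subset[OF assms(2)[OF that]]) simp
  then have finite: "finite (Sigma I B)"
    using assms(1) by (intro finite_SigmaI)
  have "(\<Union>i\<in>I. B i) = snd ` Sigma I B" by force
  then have "seq_prob q (\<Union>i\<in>I. B i) \<le> (\<Sum>p\<in>Sigma I B. prod_list (map q (snd p)))"
    unfolding seq_prob_def using assms finite
    by (auto intro!: sum_image_le[unfolded comp_def] prod_list_nonneg_outcome_seqs)
  also have "\<dots> = (\<Sum>i\<in>I. seq_prob q (B i))"
    unfolding seq_prob_def using sum.Sigma[of I B "\<lambda>i os. prod_list (map q os)"] assms(1) finite_B
    by (simp add: split_def)
  finally show ?thesis .
qed

lemma seq_prob_Un_le:
  assumes "A \<subseteq> outcome_seqs N m" "B \<subseteq> outcome_seqs N m"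
  shows "seq_prob q (A \<union> B) \<le> seq_prob q A + seq_prob q B"
proof -
  have "finite A" "finite B"
    using assms by (auto intro: finite_subset)
  moreover have "0 \<le> seq_prob q (A \<inter> B)"
    unfolding seq_prob_def using assms by (auto intro!: sum_nonneg prod_list_nonneg_outcome_seqs)
  ultimately show ?thesis
    unfolding seq_prob_def by (simp add: sum_Un)
qed

lemma seq_prob_union_bound:
  assumes "finite I" "G \<subseteq> outcome_seqs N m" "\<And>i. i \<in> I \<Longrightarrow> B i \<subseteq> outcome_seqs N m"
    and "outcome_seqs N m - G \<subseteq> (\<Union>i\<in>I. B i)"
  shows "1 - (\<Sum>i\<in>I. seq_prob q (B i)) \<le> seq_prob q G"
proof -
  have "1 = seq_prob q G + seq_prob q (outcome_seqs N m - G)"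
    using assms(2) seq_prob_outcome_seqs[of N]
    by (simp add: seq_prob_def sum.subset_diff[of G "outcome_seqs N m"])
  also have "seq_prob q (outcome_seqs N m - G) \<le> seq_prob q (\<Union>i\<in>I. B i)"
    using assms by (intro seq_prob_mono[of _ _ N]) auto
  also have "\<dots> \<le> (\<Sum>i\<in>I. seq_prob q (B i))"
    using assms by (intro seq_prob_UN_le)
  finally show ?thesis by simp
qed

definition mean :: "(nat \<Rightarrow> real) \<Rightarrow> real" where
  "mean g = (\<Sum>t<m. q t * g t)"

lemma abs_mean_le:
  assumes "\<And>t. t < m \<Longrightarrow> \<bar>g t\<bar> \<le> 1"
  shows "\<bar>mean g\<bar> \<le> 1"
proof -
  have "\<bar>mean g\<bar> \<le> (\<Sum>t<m. \<bar>q t * g t\<bar>)"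
    unfolding mean_def by (rule sum_abs)
  also have "\<dots> \<le> (\<Sum>t<m. q t)"
    using assms nonneg by (intro sum_mono) (auto simp: abs_mult intro: mult_left_le)
  finally show ?thesis
    by (simp add: sum_eq_1)
qed

lemma centered_mgf_le:
  assumes bounded: "\<And>t. t < m \<Longrightarrow> \<bar>g t\<bar> \<le> 1" and s: "0 \<le> s" "s \<le> 1 / 2"
  shows "(\<Sum>t<m. q t * exp (s * (g t - mean g))) \<le> exp (4 * s\<^sup>2)"
proof -
  have dev: "\<bar>g t - mean g\<bar> \<le> 2" if "t < m" for t
    using bounded[OF that] abs_mean_le[of g, OF bounded] by linarith
  have "(\<Sum>t<m. q t * exp (s * (g t - mean g))) \<le> (\<Sum>t<m. q t * (1 + s * (g t - mean g) + s\<^sup>2 * 4))"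
  proof (intro sum_mono mult_left_mono)
    fix t assume "t \<in> {..<m}"
    then have t: "t < m" by simp
    have "\<bar>s * (g t - mean g)\<bar> \<le> 1"
      using dev[OF t] s mult_mono[of s "1 / 2" "\<bar>g t - mean g\<bar>" 2] by (simp add: abs_mult)
    moreover have "(g t - mean g)\<^sup>2 \<le> 2\<^sup>2"
      using dev[OF t] by (metis abs_le_square_iff abs_numeral)
    then have "(s * (g t - mean g))\<^sup>2 \<le> s\<^sup>2 * 4"
      using mult_left_mono[of "(g t - mean g)\<^sup>2" 4 "s\<^sup>2"] by (simp add: power_mult_distrib)
    ultimately show "exp (s * (g t - mean g)) \<le> 1 + s * (g t - mean g) + s\<^sup>2 * 4"
      using exp_le_quadratic by fastforce
    show "0 \<le> q t" using nonneg[OF t] .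
  qed
  also have "\<dots> = 1 + 4 * s\<^sup>2"
    by (simp add: algebra_simps sum.distrib sum_subtractf sum_distrib_left[symmetric]
        sum_distrib_right[symmetric] sum_eq_1 mean_def)
  also have "\<dots> \<le> exp (4 * s\<^sup>2)"
    by (rule exp_ge_add_one_self)
  finally show ?thesis .
qed

definition upper_event :: "nat \<Rightarrow> (nat \<Rightarrow> real) \<Rightarrow> real \<Rightarrow> nat list set" where
  "upper_event N g \<epsilon> = {os \<in> outcome_seqs N m. N * mean g + N * \<epsilon> \<le> (\<Sum>t\<leftarrow>os. g t)}"

lemma upper_event_prob_le:
  assumes bounded: "\<And>t. t < m \<Longrightarrow> \<bar>g t\<bar> \<le> 1" and \<epsilon>: "0 < \<epsilon>" "\<epsilon> \<le> 2"
  shows "seq_prob q (upper_event N g \<epsilon>) \<le> exp (- real N * \<epsilon>\<^sup>2 / 16)"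
proof -
  define s where "s = \<epsilon> / 8"
  have s: "0 \<le> s" "s \<le> 1 / 2" using \<epsilon> by (auto simp: s_def)
  define tilted where "tilted os = prod_list (map q os) * exp (s * ((\<Sum>t\<leftarrow>os. g t) - N * mean g))" for os
  have tilted_nonneg: "0 \<le> tilted os" if "os \<in> outcome_seqs N m" for os
    using that by (simp add: tilted_def prod_list_nonneg_outcome_seqs)
  text \<open>Markov's inequality for the exponentially tilted sum.\<close>
  have "seq_prob q (upper_event N g \<epsilon>) \<le> (\<Sum>os\<in>upper_event N g \<epsilon>. tilted os * exp (- s * N * \<epsilon>))"
    unfolding seq_prob_def
  proof (intro sum_mono)
    fix os assume os: "os \<in> upper_event N g \<epsilon>"
    have "s * (N * \<epsilon>) \<le> s * ((\<Sum>t\<leftarrow>os. g t) - N * mean g)"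
      using os s by (intro mult_left_mono) (auto simp: upper_event_def)
    then have "1 \<le> exp (s * ((\<Sum>t\<leftarrow>os. g t) - N * mean g)) * exp (- s * N * \<epsilon>)"
      by (simp add: exp_add[symmetric])
    moreover have "0 \<le> prod_list (map q os)"
      using os prod_list_nonneg_outcome_seqs by (auto simp: upper_event_def)
    ultimately show "prod_list (map q os) \<le> tilted os * exp (- s * N * \<epsilon>)"
      using mult_left_mono by (fastforce simp: tilted_def mult.assoc)
  qed
  also have "\<dots> \<le> (\<Sum>os\<in>outcome_seqs N m. tilted os) * exp (- s * N * \<epsilon>)"
    unfolding sum_distrib_right
    by (intro sum_mono2) (auto simp: upper_event_def tilted_nonneg)
  also have "(\<Sum>os\<in>outcome_seqs N m. tilted os) = (\<Sum>t<m. q t * exp (s * (g t - mean g))) ^ N"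
    unfolding sum_prod_list_outcome_seqs[symmetric]
    by (intro sum.cong refl) (auto simp: tilted_def outcome_seqs_def prod_list_mult_exp_centered_sum)
  also have "\<dots> * exp (- s * N * \<epsilon>) \<le> exp (4 * s\<^sup>2) ^ N * exp (- s * N * \<epsilon>)"
    by (intro mult_right_mono power_mono centered_mgf_le bounded s sum_nonneg mult_nonneg_nonneg nonneg) auto
  also have "\<dots> = exp (- real N * \<epsilon>\<^sup>2 / 16)"
    by (simp add: exp_of_nat_mult[symmetric] exp_add[symmetric] s_def power2_eq_square field_simps)
  finally show ?thesis .
qed

definition deviation_event :: "nat \<Rightarrow> (nat \<Rightarrow> real) \<Rightarrow> real \<Rightarrow> nat list set" where
  "deviation_event N g \<epsilon> = {os \<in> outcome_seqs N m. \<epsilon> < \<bar>(\<Sum>t\<leftarrow>os. g t) / N - mean g\<bar>}"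

lemma deviation_event_eq_empty:
  assumes bounded: "\<And>t. t < m \<Longrightarrow> \<bar>g t\<bar> \<le> 1" and "0 < N" "2 \<le> \<epsilon>"
  shows "deviation_event N g \<epsilon> = {}"
proof -
  have "\<bar>(\<Sum>t\<leftarrow>os. g t) / N - mean g\<bar> \<le> 2" if "os \<in> outcome_seqs N m" for os
  proof -
    have "\<bar>\<Sum>t\<leftarrow>os. g t\<bar> \<le> (\<Sum>t\<leftarrow>os. \<bar>g t\<bar>)"
      using sum_list_abs[of "map g os"] by (simp add: comp_def)
    also have "\<dots> \<le> (\<Sum>t\<leftarrow>os. 1)"
      using that bounded by (intro sum_list_mono) (auto simp: outcome_seqs_def)
    finally have "\<bar>(\<Sum>t\<leftarrow>os. g t) / N\<bar> \<le> 1"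
      using that \<open>0 < N\<close> by (simp add: outcome_seqs_def sum_list_triv divide_le_eq_1)
    then show ?thesis
      using abs_mean_le[of g, OF bounded] by linarith
  qed
  then show ?thesis
    using \<open>2 \<le> \<epsilon>\<close> by (force simp: deviation_event_def)
qed

lemma deviation_event_subset:
  assumes "0 < N"
  shows "deviation_event N g \<epsilon> \<subseteq> upper_event N g \<epsilon> \<union> upper_event N (\<lambda>t. - g t) \<epsilon>"
proof
  fix os assume os: "os \<in> deviation_event N g \<epsilon>"
  have "(\<Sum>t\<leftarrow>os. g t) / N - mean g = ((\<Sum>t\<leftarrow>os. g t) - N * mean g) / N"
    using assms by (simp add: diff_divide_distrib)
  then have "\<epsilon> < \<bar>(\<Sum>t\<leftarrow>os. g t) - N * mean g\<bar> / N"
    using os by (simp add: deviation_event_def)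
  then have "N * \<epsilon> < \<bar>(\<Sum>t\<leftarrow>os. g t) - N * mean g\<bar>"
    using assms by (simp add: less_divide_eq mult.commute)
  moreover have "(\<Sum>t\<leftarrow>os. - g t) = - (\<Sum>t\<leftarrow>os. g t)" "mean (\<lambda>t. - g t) = - mean g"
    by (simp_all add: uminus_sum_list_map comp_def mean_def sum_negf)
  ultimately show "os \<in> upper_event N g \<epsilon> \<union> upper_event N (\<lambda>t. - g t) \<epsilon>"
    using os by (auto simp: upper_event_def deviation_event_def abs_if split: if_splits)
qed

lemma deviation_event_prob_le:
  assumes bounded: "\<And>t. t < m \<Longrightarrow> \<bar>g t\<bar> \<le> 1" and \<epsilon>: "0 < \<epsilon>"
  shows "seq_prob q (deviation_event N g \<epsilon>) \<le> 2 * exp (- real N * \<epsilon>\<^sup>2 / 16)"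
proof -
  consider (no_samples) "N = 0" | (large) "0 < N" "2 \<le> \<epsilon>" | (small) "0 < N" "\<epsilon> \<le> 2"
    by fastforce
  then show ?thesis
  proof cases
    case no_samples
    have "seq_prob q (deviation_event N g \<epsilon>) \<le> seq_prob q (outcome_seqs N m)"
      by (rule seq_prob_mono) (auto simp: deviation_event_def)
    then show ?thesis
      using no_samples by (simp add: seq_prob_outcome_seqs)
  next
    case large
    then show ?thesis
      using deviation_event_eq_empty[OF bounded] by (simp add: seq_prob_def)
  next
    case small
    have "seq_prob q (deviation_event N g \<epsilon>)
        \<le> seq_prob q (upper_event N g \<epsilon>) + seq_prob q (upper_event N (\<lambda>t. - g t) \<epsilon>)"
      using small by (intro order.trans[OF seq_prob_mono seq_prob_Un_le] deviation_event_subset)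
        (auto simp: upper_event_def)
    also have "\<dots> \<le> exp (- real N * \<epsilon>\<^sup>2 / 16) + exp (- real N * \<epsilon>\<^sup>2 / 16)"
      using bounded small \<epsilon> by (intro add_mono upper_event_prob_le) auto
    finally show ?thesis
      by simp
  qed
qed

end

section \<open>Success probability of the estimator\<close>

lemma bell_sampling_success:
  assumes pure: "pure_state n \<psi>" and \<epsilon>: "0 < \<epsilon>"
  shows "1 - card (even_prefixes n) * (2 * exp (- real N * \<epsilon>\<^sup>2 / 16))
    \<le> success_prob n \<epsilon> N (bell_povm n) (marginal_estimate n N) \<psi>"
proof -
  have \<psi>: "\<psi> \<in> carrier_vec (2 ^ n)"
    using pure by (simp add: pure_state_def)
  define q where "q = outcome_prob (bell_povm n) \<psi>"
  have q_eq: "q t = bell_prob n \<psi> (labels_list n ! t)" if "t < 4 ^ n" for t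
    unfolding q_def by (rule outcome_prob_bell_povm[OF \<psi> that])
  interpret finite_distribution "4 ^ n" q
  proof
    show "0 \<le> q t" if "t < 4 ^ n" for t
      using q_eq[OF that] bell_prob_nonneg by simp
    show "(\<Sum>t<4 ^ n. q t) = 1"
      using sum_labels_list_nth[of "bell_prob n \<psi>" n] sum_bell_prob[OF pure] by (simp add: q_eq)
  qed
  define g where "g a t = sign_average n a (labels_list n ! t)" for a t
  have prefix: "length a = 2 * (length a div 2)" "length a div 2 \<le> n" if "a \<in> even_prefixes n" for a
    using that by (auto simp: even_prefixes_def labels_def)
  have bounded: "\<bar>g a t\<bar> \<le> 1" if "a \<in> even_prefixes n" "t < 4 ^ n" for a t
    unfolding g_def using abs_sign_average[OF labels_list_nth prefix] that by simp
  have mean_g: "mean (g a) = 2 ^ (length a div 2) * pauli_marginal n \<psi> a" if "a \<in> even_prefixes n" for a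
    using sum_labels_list_nth[of "\<lambda>x. bell_prob n \<psi> x * sign_average n a x" n]
      pauli_marginal_eq_sign_average[OF \<psi> prefix[OF that]]
    by (simp add: mean_def g_def q_eq)
  have close: "\<bar>even_estimate n N os a - pauli_marginal n \<psi> a\<bar> \<le> \<epsilon> / 2 ^ (length a div 2)"
    if "a \<in> even_prefixes n" "os \<in> outcome_seqs N (4 ^ n)" "os \<notin> deviation_event N (g a) \<epsilon>" for a os
  proof -
    have "even_estimate n N os a - pauli_marginal n \<psi> a
        = ((\<Sum>t\<leftarrow>os. g a t) / N - mean (g a)) / 2 ^ (length a div 2)"
      by (simp add: even_estimate_def g_def mean_g[OF that(1)] field_simps)
    moreover have "\<bar>(\<Sum>t\<leftarrow>os. g a t) / N - mean (g a)\<bar> \<le> \<epsilon>"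
      using that(2,3) by (simp add: deviation_event_def)
    ultimately show ?thesis
      by (simp add: abs_divide divide_right_mono)
  qed
  have "1 - (\<Sum>a\<in>even_prefixes n. seq_prob q (deviation_event N (g a) \<epsilon>))
      \<le> success_prob n \<epsilon> N (bell_povm n) (marginal_estimate n N) \<psi>"
    unfolding success_prob_eq_seq_prob q_def[symmetric] length_bell_povm
    by (rule seq_prob_union_bound)
      (auto simp: deviation_event_def intro!: good_estimates_marginal_estimate close)
  moreover have "(\<Sum>a\<in>even_prefixes n. seq_prob q (deviation_event N (g a) \<epsilon>))
      \<le> card (even_prefixes n) * (2 * exp (- real N * \<epsilon>\<^sup>2 / 16))"
    using bounded \<epsilon> by (intro sum_bounded_above deviation_event_prob_le) auto
  ultimately show ?thesis
    by linarith
qed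

lemma card_even_prefixes_tail_le:
  assumes \<delta>: "0 < \<delta>" "\<delta> < 1 / 2" and X: "80 * real n * ln (1 / \<delta>) \<le> X"
  shows "real (card (even_prefixes n)) * (2 * exp (- X / 16)) \<le> \<delta>"
proof (cases "n = 0")
  case True
  then show ?thesis using \<delta> by simp
next
  case False
  have "real (card (even_prefixes n)) * 2 \<le> 8 ^ n * 2 ^ n"
    using card_even_prefixes_le[of n] False
    by (intro mult_mono) (auto simp: self_le_power simp flip: of_nat_le_iff)
  also have "\<dots> = 16 ^ n"
    by (simp flip: power_mult_distrib)
  finally have count: "real (card (even_prefixes n)) * 2 \<le> 16 ^ n" .
  have "exp (- X / 16) \<le> exp (real (5 * n) * ln \<delta>)"
    using X \<delta> by (simp add: ln_div)
  also have "\<dots> = exp (ln \<delta>) ^ (5 * n)"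
    by (rule exp_of_nat_mult)
  also have "\<dots> = \<delta> ^ (5 * n)"
    using \<delta> by simp
  finally have tail: "exp (- X / 16) \<le> \<delta> ^ (5 * n)" .
  have "real (card (even_prefixes n)) * (2 * exp (- X / 16)) \<le> 16 ^ n * \<delta> ^ (5 * n)"
    using count tail by (simp only: mult.assoc[symmetric]) (intro mult_mono, auto)
  also have "\<dots> = (16 * \<delta> ^ 4) ^ n * \<delta> ^ n"
    by (simp add: power_mult_distrib power_add[symmetric] power_mult[symmetric])
  also have "\<dots> \<le> 1 * \<delta>"
  proof (intro mult_mono power_le_one)
    have "\<delta> ^ 4 \<le> (1 / 2) ^ 4"
      using \<delta> by (intro power_mono) auto
    moreover have "(1 / 2 :: real) ^ 4 = 1 / 16"
      by (simp add: power4_eq_xxxx)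
    ultimately show "16 * \<delta> ^ 4 \<le> 1"
      by linarith
    show "\<delta> ^ n \<le> \<delta>"
      using power_decreasing[of 1 n \<delta>] False \<delta> by simp
  qed (use \<delta> in auto)
  finally show ?thesis by simp
qed

theorem corollary3:
  shows "\<exists>C > 0. \<forall>(n::nat) (\<epsilon>::real) (\<delta>::real) (N::nat).
           \<epsilon> > 0 \<longrightarrow> 0 < \<delta> \<longrightarrow> \<delta> < 1/2 \<longrightarrow>
           real N \<ge> C * real n * ln (1 / \<delta>) / \<epsilon> ^ 2 \<longrightarrow>
           (\<exists>Ms est. is_povm (4 ^ n) Ms \<and>
              (\<forall>\<psi>. pure_state n \<psi> \<longrightarrow> success_prob n \<epsilon> N Ms est \<psi> \<ge> 1 - \<delta>))"
proof (intro exI[of _ 80] conjI allI impI)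
  fix n N :: nat and \<epsilon> \<delta> :: real
  assume \<epsilon>: "\<epsilon> > 0" and \<delta>: "0 < \<delta>" "\<delta> < 1/2"
    and N: "real N \<ge> 80 * real n * ln (1 / \<delta>) / \<epsilon> ^ 2"
  have "80 * real n * ln (1 / \<delta>) \<le> real N * \<epsilon>\<^sup>2"
    using N \<epsilon> by (simp add: divide_le_eq)
  then have failure: "real (card (even_prefixes n)) * (2 * exp (- real N * \<epsilon>\<^sup>2 / 16)) \<le> \<delta>"
    using card_even_prefixes_tail_le[OF \<delta>] by simp
  show "\<exists>Ms est. is_povm (4 ^ n) Ms \<and>
      (\<forall>\<psi>. pure_state n \<psi> \<longrightarrow> success_prob n \<epsilon> N Ms est \<psi> \<ge> 1 - \<delta>)"
  proof (intro exI conjI allI impI)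
    show "is_povm (4 ^ n) (bell_povm n)"
      by (rule bell_povm_is_povm)
    fix \<psi> assume "pure_state n \<psi>"
    from bell_sampling_success[OF this \<epsilon>, of N] failure
    show "success_prob n \<epsilon> N (bell_povm n) (marginal_estimate n N) \<psi> \<ge> 1 - \<delta>"
      by linarith
  qed
qed simp

end
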